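(* Let $\{\xi_k\}$ be the sequence of parameters produced by Algorithm DFNDFL (described in the context) applied to $\min\{f(x): x\in X\cap\mathcal{Z}\}$. Then $\lim_{k\to\infty}\xi_k=0$.
   Context: Setting. $\{1,\dots,n\}=I^c\cup I^z$, $I^c\cap I^z=\emptyset$; for $v\in\mathbb{R}^n$, $v_c=(v_i)_{i\in I^c}$, $v_z=(v_i)_{i\in I^z}$. $l,u\in\mathbb{R}^n$ finite, $l_i<u_i$, $l_i,u_i\in\mathbb{Z}$ for $i\in I^z$; $X=\{x:l\le x\le u\}$; $\mathcal{Z}=\{x:x_i\in\mathbb{Z}\ \forall i\in I^z\}$; $[x]_{[l,u]}=\max\{l,\min\{u,x\}\}$ componentwise; $\|\cdot\|$ Euclidean. $f:\mathbb{R}^n\to\mathbb{R}$ is Lipschitz w.r.t. continuous variables: $\exists L>0$, $|f(x)-f(y)|\le L\|x-y\|$ whenever $x_z=y_z$. A vector in $\mathbb{Z}^p$ is primitive if the gcd of its components is 1. For $x\in X\cap\mathcal{Z}$: $D^z(x)=\{d\in\mathbb{Z}^n: d_i=0\ (i\in I^c),\ d_z \text{ primitive},\ x+d\in X\cap\mathcal{Z}\}$; $D^c(x)=\{s\in\mathbb{R}^n: s_i=0\ (i\in I^z),\ s_i\ge0 \text{ if } i\in I^c, x_i=l_i,\ s_i\le 0 \text{ if } i\in I^c, x_i=u_i\}$. Procedures (data $\gamma>0$, $\delta\in(0,1)$). PCS$(\tilde\alpha,w,p)$: set $\alpha=\tilde\alpha$; if $f([w+\alpha p]_{[l,u]})\le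 f(w)-\gamma\alpha^2$ set $\tilde p=p$, else if $f([w-\alpha p]_{[l,u]})\le f(w)-\gamma\alpha^2$ set $\tilde p=-p$, else return $(0,p)$; then repeat: $\beta=\alpha/\delta$; if $f([w+\beta\tilde p]_{[l,u]})>f(w)-\gamma\beta^2$ return $(\alpha,\tilde p)$, else $\alpha=\beta$. DS$(\tilde\alpha,w,p,\xi)$: let $\bar\alpha$ be the largest $\alpha\ge0$ with $w+\alpha p\in X\cap\mathcal{Z}$, set $\alpha=\min\{\bar\alpha,\tilde\alpha\}$; if not ($\alpha>0$ and $f(w+\alpha p)\le f(w)-\xi$) return $0$; otherwise, while $\alpha<\bar\alpha$ and $f(w+\min\{\bar\alpha,2\alpha\}p)\le f(w)-\xi$, set $\alpha=\min\{\bar\alpha,2\alpha\}$; then return $\alpha$. Algorithm DFNDFL. Data: $x_0\in X\cap\mathcal{Z}$, $\xi_0>0$, $\theta\in(0,1)$; a sequence $\{s_k\}$ with $s_k\in D^c(x_0)$, $\|s_k\|=1$; $\tilde\alpha^c_0=1$; a set $D_0\subset D^z(x_0)$ with $\tilde\alpha^{(d)}_0=1$ for $d\in D_0$; $D:=D_0$ (tentative steps $\tilde\alpha^{(d)}$ not updated in an iteration keep their value). For $k=0,1,\dots$: Phase 1: $(\alpha^c_k,\tilde s_k)=$PCS$(\tilde\alpha^c_k,x_k,s_k)$; if $\alpha^c_k=0$ set $\tilde\alpha^c_{k+1}=\theta\tilde\alpha^c_k$, $\tilde x_k=x_k$; else $\tilde\alpha^c_{k+1}=\alpha^c_k$, $\tilde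 x_k=[x_k+\alpha^c_k\tilde s_k]_{[l,u]}$. Phase 2.A: set $y^+=\tilde x_k$; while $D\ne\emptyset$ and $y^+=\tilde x_k$: choose $d\in D$, set $D=D\setminus\{d\}$, $y=y^+$, $\alpha=$DS$(\tilde\alpha^{(d)}_k,y,d,\xi_k)$; if $\alpha=0$ set $y^+=y$, $\tilde\alpha^{(d)}_{k+1}=\max\{1,\lfloor\tilde\alpha^{(d)}_k/2\rfloor\}$; else $y^+=y+\alpha d$, $\tilde\alpha^{(d)}_{k+1}=\alpha$. Phase 2.B: if $y^+=\tilde x_k$ and the Discrete Search failed (returned $0$) with $\tilde\alpha^{(d)}_k=1$ for all $d\in D_k$, then set $\xi_{k+1}=\theta\xi_k$ and: if $D_k\supseteq D^z(\tilde x_k)$ set $D_{k+1}=D_k$; otherwise generate $D_{k+1}$ with $D_{k+1}\subseteq D^z(\tilde x_k)$, $D_{k+1}\supset D_k$ (strictly), and set $\tilde\alpha^{(d)}_{k+1}=1$ for $d\in D_{k+1}\setminus D_k$. Otherwise set $D_{k+1}=D_k$ and $\xi_{k+1}=\xi_k$. In all cases set $D=D_{k+1}$. Phase 3: choose any $x_{k+1}\in X\cap\mathcal{Z}$ with $f(x_{k+1})\le f(y^+)$. *)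

theory Defs
  imports "HOL-Analysis.Analysis"
begin

text \<open>Vectors live in real^'n (Euclidean norm); the index type 'n plays the role of
{1..n}, split into continuous indices Ic and integer indices Iz.\<close>

definition Xbox :: "real^'n \<Rightarrow> real^'n \<Rightarrow> (real^'n) set" where
  "Xbox l u = {x. \<forall>i. l$i \<le> x$i \<and> x$i \<le> u$i}"

definition Zset :: "'n set \<Rightarrow> (real^'n) set" where
  "Zset Iz = {x. \<forall>i\<in>Iz. x$i \<in> \<int>}"

definition proj :: "real^'n \<Rightarrow> real^'n \<Rightarrow> real^'n \<Rightarrow> real^'n" where
  "proj l u x = (\<chi> i. max (l$i) (min (u$i) (x$i)))"

definition Dz :: "'n set \<Rightarrow> 'n set \<Rightarrow> real^'n \<Rightarrow> real^'n \<Rightarrow> real^'n \<Rightarrow> (real^'n) set" where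
  "Dz Ic Iz l u x = {d. (\<forall>i. d$i \<in> \<int>) \<and> (\<forall>i\<in>Ic. d$i = 0)
      \<and> Gcd ((\<lambda>i. \<lfloor>d$i\<rfloor>) ` Iz) = 1 \<and> x + d \<in> Xbox l u \<inter> Zset Iz}"

definition Dc :: "'n set \<Rightarrow> 'n set \<Rightarrow> real^'n \<Rightarrow> real^'n \<Rightarrow> real^'n \<Rightarrow> (real^'n) set" where
  "Dc Ic Iz l u x = {s. (\<forall>i\<in>Iz. s$i = 0)
      \<and> (\<forall>i\<in>Ic. x$i = l$i \<longrightarrow> s$i \<ge> 0) \<and> (\<forall>i\<in>Ic. x$i = u$i \<longrightarrow> s$i \<le> 0)}"

text \<open>Projected Continuous Search.  The expansion loop returns tal/delta^j where j is the
least index such that the test fails at the next trial step tal/delta^(j+1).\<close>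
definition PCS :: "(real^'n \<Rightarrow> real) \<Rightarrow> real^'n \<Rightarrow> real^'n \<Rightarrow> real \<Rightarrow> real
    \<Rightarrow> real \<Rightarrow> real^'n \<Rightarrow> real^'n \<Rightarrow> real \<times> (real^'n)" where
  "PCS f l u \<gamma> \<delta> tal w p =
    (let ok = (\<lambda>a q. f (proj l u (w + a *\<^sub>R q)) \<le> f w - \<gamma> * a\<^sup>2) in
     if ok tal p then (tal / \<delta> ^ (LEAST j. \<not> ok (tal / \<delta> ^ Suc j) p), p)
     else if ok tal (-p) then (tal / \<delta> ^ (LEAST j. \<not> ok (tal / \<delta> ^ Suc j) (-p)), -p)
     else (0, p))"

text \<open>Discrete Search.  Starting from a0 = min abar tal, the iterates of
a := min abar (2a) are min abar (2^j a0); the loop stops at the least j for which the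
continuation test fails.\<close>
definition DS :: "(real^'n \<Rightarrow> real) \<Rightarrow> 'n set \<Rightarrow> real^'n \<Rightarrow> real^'n \<Rightarrow> real
    \<Rightarrow> real^'n \<Rightarrow> real^'n \<Rightarrow> real \<Rightarrow> real" where
  "DS f Iz l u tal w p \<xi> =
    (let abar = (GREATEST a. 0 \<le> a \<and> w + a *\<^sub>R p \<in> Xbox l u \<inter> Zset Iz);
         a0 = min abar tal;
         it = (\<lambda>j::nat. min abar (2 ^ j * a0));
         cont = (\<lambda>j. it j < abar \<and> f (w + it (Suc j) *\<^sub>R p) \<le> f w - \<xi>)
     in if \<not> (a0 > 0 \<and> f (w + a0 *\<^sub>R p) \<le> f w - \<xi>) then 0
        else it (LEAST j. \<not> cont j))"

fun phase2A :: "(real^'n \<Rightarrow> real) \<Rightarrow> 'n set \<Rightarrow> real^'n \<Rightarrow> real^'n \<Rightarrow> real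
    \<Rightarrow> real^'n \<Rightarrow> (real^'n \<Rightarrow> real) \<Rightarrow> (real^'n) list \<Rightarrow> (real^'n) \<times> (real^'n \<Rightarrow> real)" where
  "phase2A f Iz l u \<xi> y ta [] = (y, ta)"
| "phase2A f Iz l u \<xi> y ta (d # ds) =
    (let a = DS f Iz l u (ta d) y d \<xi> in
     if a = 0 then phase2A f Iz l u \<xi> y (ta(d := max 1 (of_int \<lfloor>ta d / 2\<rfloor>))) ds
     else (y + a *\<^sub>R d, ta(d := a)))"

text \<open>A run of DFNDFL: x k = x_k, xt k = tilde x_k, ac k = tilde alpha^c_k, xi k = xi_k,
D k = D_k, ta k d = tilde alpha^(d)_k, ord k = the order in which D_k is scanned in
Phase 2.A (any enumeration of D_k; the loop may stop early).\<close>
definition DFNDFL_run ::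
  "'n set \<Rightarrow> 'n set \<Rightarrow> real^'n \<Rightarrow> real^'n \<Rightarrow> (real^'n \<Rightarrow> real) \<Rightarrow> real \<Rightarrow> real \<Rightarrow> real
   \<Rightarrow> real^'n \<Rightarrow> real \<Rightarrow> (nat \<Rightarrow> real^'n) \<Rightarrow> (real^'n) set
   \<Rightarrow> (nat \<Rightarrow> real^'n) \<Rightarrow> (nat \<Rightarrow> real^'n) \<Rightarrow> (nat \<Rightarrow> real) \<Rightarrow> (nat \<Rightarrow> real)
   \<Rightarrow> (nat \<Rightarrow> (real^'n) set) \<Rightarrow> (nat \<Rightarrow> real^'n \<Rightarrow> real) \<Rightarrow> (nat \<Rightarrow> (real^'n) list) \<Rightarrow> bool"
where
  "DFNDFL_run Ic Iz l u f \<gamma> \<delta> \<theta> x0 \<xi>0 s D0 x xt ac xi D ta ord \<longleftrightarrow>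
     x 0 = x0 \<and> xi 0 = \<xi>0 \<and> ac 0 = 1 \<and> D 0 = D0 \<and> (\<forall>d\<in>D0. ta 0 d = 1) \<and>
     (\<forall>k.
       (let (a, st) = PCS f l u \<gamma> \<delta> (ac k) (x k) (s k) in
          if a = 0 then ac (Suc k) = \<theta> * ac k \<and> xt k = x k
          else ac (Suc k) = a \<and> xt k = proj l u (x k + a *\<^sub>R st))
       \<and> distinct (ord k) \<and> set (ord k) = D k
       \<and> (let (yp, ta') = phase2A f Iz l u (xi k) (xt k) (ta k) (ord k) in
           (if yp = xt k \<and> (\<forall>d\<in>D k. ta k d = 1) then
              xi (Suc k) = \<theta> * xi k \<and>
              (if Dz Ic Iz l u (xt k) \<subseteq> D k then D (Suc k) = D k \<and> ta (Suc k) = ta'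
               else D (Suc k) \<subseteq> Dz Ic Iz l u (xt k) \<and> D k \<subset> D (Suc k)
                    \<and> ta (Suc k) = (\<lambda>d. if d \<in> D (Suc k) - D k then 1 else ta' d))
            else D (Suc k) = D k \<and> xi (Suc k) = xi k \<and> ta (Suc k) = ta')
           \<and> x (Suc k) \<in> Xbox l u \<inter> Zset Iz \<and> f (x (Suc k)) \<le> f yp))"

end

theory Submission
  imports Defs
begin

(* Phase 1 never increases f, and a successful Phase 2.A decreases it by at least \<xi>\<^sub>k.
   Since f is bounded below on the feasible set (it is Lipschitz in the continuous variables and only
   finitely many integer parts occur), f(x\<^sub>k) converges, so a fixed \<xi> can pay for only finitely
   many such decreases. If \<xi> were never reduced after some N, then D and \<xi> would stay frozen,
   Phase 2.A would eventually always fail, and the tentative steps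
   \<alpha> \<mapsto> max 1 \<lfloor>\<alpha>/2\<rfloor> of the finitely many directions in D\<^sub>N would all reach 1;
   that is exactly the test of Phase 2.B, which then reduces \<xi>. So \<xi> is multiplied by \<theta>
   infinitely often, and the nonincreasing sequence \<xi> tends to 0. *)

lemma invariant_at_LEAST_exit:
  assumes "Q 0" and "\<And>j. C j \<Longrightarrow> Q (Suc j)"
  shows "Q (LEAST j. \<not> C j)"
proof (cases "LEAST j. \<not> C j")
  case 0
  with assms(1) show ?thesis by simp
next
  case (Suc m)
  have "C m"
  proof (rule ccontr)
    assume "\<not> C m"
    then have "(LEAST j. \<not> C j) \<le> m" by (rule Least_le)
    with Suc show False by simp
  qed
  with Suc assms(2) show ?thesis by simp
qed

lemma PCS_sufficient_decrease:
  assumes "PCS f l u \<gamma> \<delta> tal w p = (a, st)" and "a \<noteq> 0"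
  shows "f (proj l u (w + a *\<^sub>R st)) \<le> f w - \<gamma> * a\<^sup>2"
proof -
  define ok where "ok a q \<longleftrightarrow> f (proj l u (w + a *\<^sub>R q)) \<le> f w - \<gamma> * a\<^sup>2" for a q
  have "ok (tal / \<delta> ^ (LEAST j. \<not> ok (tal / \<delta> ^ Suc j) q)) q" if "ok tal q" for q
    using invariant_at_LEAST_exit[where Q = "\<lambda>j. ok (tal / \<delta> ^ j) q"] that by simp
  with assms show ?thesis
    unfolding PCS_def Let_def ok_def[symmetric] by (auto split: if_splits)
qed

lemma DS_sufficient_decrease:
  assumes "DS f Iz l u tal w p \<xi> = a" and "a \<noteq> 0"
  shows "f (w + a *\<^sub>R p) \<le> f w - \<xi>"
proof -
  define abar where "abar = (GREATEST a. 0 \<le> a \<and> w + a *\<^sub>R p \<in> Xbox l u \<inter> Zset Iz)"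
  define it where "it j = min abar (2 ^ j * min abar tal)" for j :: nat
  define ok where "ok b \<longleftrightarrow> f (w + b *\<^sub>R p) \<le> f w - \<xi>" for b
  have DS_eq: "DS f Iz l u tal w p \<xi> =
      (if \<not> (0 < it 0 \<and> ok (it 0)) then 0 else it (LEAST j. \<not> (it j < abar \<and> ok (it (Suc j)))))"
    unfolding DS_def Let_def abar_def[symmetric] ok_def by (simp add: it_def)
  have "ok (it (LEAST j. \<not> (it j < abar \<and> ok (it (Suc j)))))" if "ok (it 0)"
    using that by (rule invariant_at_LEAST_exit[where Q = "\<lambda>j. ok (it j)"]) simp
  with assms show ?thesis
    unfolding DS_eq ok_def by (auto split: if_splits)
qed

definition halve :: "real \<Rightarrow> real" where
  "halve t = max 1 (of_int \<lfloor>t / 2\<rfloor>)"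

lemma halve_Ints: "halve t \<in> \<int>"
  by (cases "(1::real) \<le> of_int \<lfloor>t / 2\<rfloor>") (auto simp: halve_def max_def)

lemma one_le_halve: "1 \<le> halve t"
  by (simp add: halve_def)

lemma halve_one [simp]: "halve 1 = 1"
  by (simp add: halve_def)

lemma halve_less: "1 < t \<Longrightarrow> halve t < t"
  by (simp add: halve_def) linarith

lemma funpow_halve_reaches_one:
  assumes "t \<in> \<int>" and "1 \<le> t"
  shows "\<exists>n. (halve ^^ n) t = 1"
  using assms
proof (induction "nat \<lfloor>t\<rfloor>" arbitrary: t rule: less_induct)
  case less
  show ?case
  proof (cases "t = 1")
    case True
    then show ?thesis by (metis funpow_0)
  next
    case False
    with less.prems have "halve t < t" by (intro halve_less) simp
    moreover obtain m n :: int where "t = of_int m" and "halve t = of_int n"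
      using less.prems(1) halve_Ints by (metis Ints_cases)
    ultimately have "nat \<lfloor>halve t\<rfloor> < nat \<lfloor>t\<rfloor>"
      using one_le_halve[of t] by simp
    then obtain n where "(halve ^^ n) (halve t) = 1"
      using less.hyps halve_Ints one_le_halve by blast
    then show ?thesis by (metis funpow_Suc_right o_apply)
  qed
qed

lemma eventually_funpow_halve_eq_one: "\<forall>\<^sub>F n in sequentially. (halve ^^ n) t = 1"
proof -
  obtain m where m: "(halve ^^ m) (halve t) = 1"
    using funpow_halve_reaches_one halve_Ints one_le_halve by blast
  have "(halve ^^ (j + Suc m)) t = 1" for j
  proof (induction j)
    case 0
    from m show ?case by (metis add_0 funpow_Suc_right o_apply)
  next
    case (Suc j)
    then show ?case by simp
  qed
  then show ?thesis
    by (subst eventually_sequentially_seg[symmetric, of _ "Suc m"]) simp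
qed

lemma eventually_halving_sequence_eq_one:
  assumes "\<forall>\<^sub>F k in sequentially. s (Suc k) = halve (s k)"
  shows "\<forall>\<^sub>F k in sequentially. s k = 1"
proof -
  obtain M where M: "\<And>k. M \<le> k \<Longrightarrow> s (Suc k) = halve (s k)"
    using assms by (auto simp: eventually_sequentially)
  have "s (j + M) = (halve ^^ j) (s M)" for j
    by (induction j) (simp_all add: M)
  then show ?thesis
    using eventually_funpow_halve_eq_one[of "s M"]
    by (subst eventually_sequentially_seg[symmetric, of _ M]) simp
qed

lemma phase2A_success_or_halving:
  assumes "distinct ds"
  shows "f (fst (phase2A f Iz l u \<xi> y ta ds)) \<le> f y - \<xi> \<or>
    phase2A f Iz l u \<xi> y ta ds = (y, \<lambda>e. if e \<in> set ds then halve (ta e) else ta e)"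
  using assms
proof (induction ds arbitrary: ta)
  case Nil
  then show ?case by simp
next
  case (Cons d ds)
  show ?case
  proof (cases "DS f Iz l u (ta d) y d \<xi> = 0")
    case True
    then have step:
      "phase2A f Iz l u \<xi> y ta (d # ds) = phase2A f Iz l u \<xi> y (ta(d := halve (ta d))) ds"
      by (simp add: Let_def halve_def)
    have halved:
      "(\<lambda>e. if e \<in> set ds then halve ((ta(d := halve (ta d))) e) else (ta(d := halve (ta d))) e)
        = (\<lambda>e. if e \<in> set (d # ds) then halve (ta e) else ta e)"
      using Cons.prems by (auto simp: fun_eq_iff)
    from Cons.prems have "distinct ds" by simp
    then show ?thesis
      unfolding step halved[symmetric] by (rule Cons.IH)
  next
    case False
    with DS_sufficient_decrease[OF refl False] show ?thesis
      by (simp add: Let_def)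
  qed
qed

lemma decseq_bdd_below_eventually_drop_less:
  fixes a :: "nat \<Rightarrow> real"
  assumes "decseq a" and "bdd_below (range a)" and "0 < c"
  shows "\<forall>\<^sub>F k in sequentially. a k - c < a (Suc k)"
proof -
  obtain B where "\<forall>k. B \<le> a k"
    using assms(2) by (auto simp: bdd_below_def)
  with assms(1) obtain L where "a \<longlonglongrightarrow> L"
    by (rule decseq_convergent)
  then have "(\<lambda>k. a (Suc k) - a k) \<longlonglongrightarrow> L - L"
    by (intro tendsto_diff LIMSEQ_Suc)
  from order_tendstoD(1)[OF this, of "- c"] assms(3) show ?thesis
    by (auto elim: eventually_mono)
qed

lemma frequently_contracted_tendsto_zero:
  fixes a :: "nat \<Rightarrow> real"
  assumes "0 \<le> \<theta>" and "\<theta> < 1" and nonneg: "\<And>k. 0 \<le> a k"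
    and steps: "\<And>k. a (Suc k) = \<theta> * a k \<or> a (Suc k) = a k"
    and contracted: "\<exists>\<^sub>F k in sequentially. a (Suc k) = \<theta> * a k"
  shows "a \<longlonglongrightarrow> 0"
proof -
  have "decseq a"
  proof (rule decseq_SucI)
    fix k
    from steps[of k] nonneg[of k] \<open>0 \<le> \<theta>\<close> \<open>\<theta> < 1\<close> show "a (Suc k) \<le> a k"
      by (auto intro!: mult_left_le_one_le)
  qed
  moreover from nonneg have bdd: "bdd_below (range a)"
    by (intro bdd_belowI2)
  ultimately obtain L where L: "a \<longlonglongrightarrow> L" "\<And>k. L \<le> a k"
    using decseq_convergent[of a 0] nonneg by blast
  have "L = 0"
  proof (rule ccontr)
    assume "L \<noteq> 0"
    moreover have "0 \<le> L"
      using L(1) nonneg by (intro LIMSEQ_le_const) auto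
    ultimately have "0 < (1 - \<theta>) * L"
      using \<open>\<theta> < 1\<close> by simp
    with \<open>decseq a\<close> bdd have "\<forall>\<^sub>F k in sequentially. a k - (1 - \<theta>) * L < a (Suc k)"
      by (rule decseq_bdd_below_eventually_drop_less)
    with contracted obtain k where "a (Suc k) = \<theta> * a k" "a k - (1 - \<theta>) * L < a (Suc k)"
      by (metis (mono_tags, lifting) frequently_eventually_frequently frequentlyE)
    then have "(1 - \<theta>) * a k < (1 - \<theta>) * L"
      by (simp add: algebra_simps)
    with L(2)[of k] \<open>\<theta> < 1\<close> show False
      by (simp add: mult_le_cancel_left_pos not_less[symmetric])
  qed
  with L(1) show ?thesis by simp
qed

(* Resetting the continuous coordinates of a feasible point to those of l moves it by at
   most \<Sum>\<^sub>i (u\<^sub>i - l\<^sub>i) and leaves only finitely many points. *)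

lemma bdd_below_mixed_integer_box:
  fixes f :: "real^'n::finite \<Rightarrow> real"
  assumes "0 \<le> L" and lip: "\<forall>y z. (\<forall>i\<in>Iz. y$i = z$i) \<longrightarrow> \<bar>f y - f z\<bar> \<le> L * norm (y - z)"
  shows "bdd_below (f ` (Xbox l u \<inter> Zset Iz))"
proof -
  define S where "S = Xbox l u \<inter> Zset Iz"
  define pin where "pin y = (\<chi> i. if i \<in> Iz then y$i else l$i)" for y :: "real^'n"
  define grid where "grid i = (if i \<in> Iz then real_of_int ` {\<lceil>l$i\<rceil>..\<lfloor>u$i\<rfloor>} else {l$i})" for i
  define C where "C = (\<Sum>i\<in>UNIV. u$i - l$i)"
  have pin_grid: "pin y \<in> vec_lambda ` PiE UNIV grid" if "y \<in> S" for y
  proof -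
    have "y$i \<in> real_of_int ` {\<lceil>l$i\<rceil>..\<lfloor>u$i\<rfloor>}" if "i \<in> Iz" for i
    proof -
      from \<open>y \<in> S\<close> \<open>i \<in> Iz\<close> obtain n where n: "y$i = of_int n"
        by (auto simp: S_def Zset_def elim: Ints_cases)
      moreover from \<open>y \<in> S\<close> have "l$i \<le> y$i" and "y$i \<le> u$i"
        by (simp_all add: S_def Xbox_def)
      ultimately have "n \<in> {\<lceil>l$i\<rceil>..\<lfloor>u$i\<rfloor>}"
        by (simp add: ceiling_le_iff le_floor_iff)
      with n show ?thesis by blast
    qed
    then have "(\<lambda>i. pin y $ i) \<in> PiE UNIV grid"
      by (auto simp: pin_def grid_def)
    then show ?thesis
      by (metis image_eqI vec_lambda_eta)
  qed
  have "finite (vec_lambda ` PiE UNIV grid)"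
    by (intro finite_imageI finite_PiE) (auto simp: grid_def)
  with pin_grid have "finite (f ` pin ` S)"
    by (meson finite_imageI finite_subset image_subsetI)
  then obtain m where m: "\<And>y. y \<in> S \<Longrightarrow> m \<le> f (pin y)"
    by (meson bdd_below_finite bdd_below.E imageI)
  have "m - L * C \<le> f y" if "y \<in> S" for y
  proof -
    from \<open>y \<in> S\<close> have box: "l$i \<le> y$i" "y$i \<le> u$i" for i
      by (auto simp: S_def Xbox_def)
    have "norm (y - pin y) \<le> (\<Sum>i\<in>UNIV. \<bar>(y - pin y)$i\<bar>)"
      by (rule norm_le_l1_cart)
    also have "\<dots> \<le> C"
      unfolding C_def by (intro sum_mono) (use box in \<open>auto simp: pin_def intro: order_trans\<close>)
    finally have "L * norm (y - pin y) \<le> L * C"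
      using \<open>0 \<le> L\<close> by (rule mult_left_mono)
    moreover have "\<bar>f y - f (pin y)\<bar> \<le> L * norm (y - pin y)"
      using lip by (simp add: pin_def)
    ultimately show ?thesis
      using m[OF \<open>y \<in> S\<close>] by linarith
  qed
  then show ?thesis
    unfolding S_def by (rule bdd_belowI2)
qed

locale DFNDFL_iterates =
  fixes Ic Iz :: "'n::finite set" and l u x0 :: "real^'n" and f :: "real^'n \<Rightarrow> real"
    and \<gamma> \<delta> \<theta> \<xi>0 :: real and s :: "nat \<Rightarrow> real^'n" and D0 :: "(real^'n) set"
    and x xt :: "nat \<Rightarrow> real^'n" and ac xi :: "nat \<Rightarrow> real"
    and D :: "nat \<Rightarrow> (real^'n) set" and ta :: "nat \<Rightarrow> real^'n \<Rightarrow> real"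
    and ord :: "nat \<Rightarrow> (real^'n) list"
  assumes run: "DFNDFL_run Ic Iz l u f \<gamma> \<delta> \<theta> x0 \<xi>0 s D0 x xt ac xi D ta ord"
    and gamma_nonneg: "0 \<le> \<gamma>" and theta_pos: "0 < \<theta>" and xi0_pos: "0 < \<xi>0"
begin

definition phase2A_out :: "nat \<Rightarrow> (real^'n) \<times> (real^'n \<Rightarrow> real)" where
  "phase2A_out k = phase2A f Iz l u (xi k) (xt k) (ta k) (ord k)"

definition xi_reduced :: "nat \<Rightarrow> bool" where
  "xi_reduced k \<longleftrightarrow> fst (phase2A_out k) = xt k \<and> (\<forall>d\<in>D k. ta k d = 1)"

lemmas run_unfolded = run[unfolded DFNDFL_run_def]

lemma x_0: "x 0 = x0"
  using run_unfolded by (rule conjunct1)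

lemma xi_0: "xi 0 = \<xi>0"
  using run_unfolded[THEN conjunct2] by (rule conjunct1)

lemmas iteration =
  run_unfolded[THEN conjunct2, THEN conjunct2, THEN conjunct2, THEN conjunct2, THEN conjunct2,
    THEN spec, unfolded Let_def case_prod_beta, folded phase2A_out_def, folded xi_reduced_def]

lemma ord_enumerates: "distinct (ord k)" "set (ord k) = D k"
  using iteration[of k] by blast+

lemma x_Suc_feasible: "x (Suc k) \<in> Xbox l u \<inter> Zset Iz"
  using iteration[of k] by blast

lemma f_x_Suc_le_phase2A_out: "f (x (Suc k)) \<le> f (fst (phase2A_out k))"
  using iteration[of k] by blast

lemma xi_Suc_if_reduced: "xi_reduced k \<Longrightarrow> xi (Suc k) = \<theta> * xi k"
  using iteration[of k] by (simp only: if_True)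

lemma unchanged_if_not_reduced:
  "\<not> xi_reduced k \<Longrightarrow> D (Suc k) = D k \<and> xi (Suc k) = xi k \<and> ta (Suc k) = snd (phase2A_out k)"
  using iteration[of k] by (simp only: if_False)

lemma phase1_nonincreasing: "f (xt k) \<le> f (x k)"
proof -
  obtain a st where pcs: "PCS f l u \<gamma> \<delta> (ac k) (x k) (s k) = (a, st)"
    by fastforce
  with iteration[of k] have "if a = 0 then xt k = x k else xt k = proj l u (x k + a *\<^sub>R st)"
    by simp
  moreover have "0 \<le> \<gamma> * a\<^sup>2"
    using gamma_nonneg by simp
  ultimately show ?thesis
    using PCS_sufficient_decrease[OF pcs] by (auto split: if_splits)
qed

lemma xi_pos: "0 < xi k"
proof (induction k)
  case 0
  from xi0_pos show ?case by (simp add: xi_0)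
next
  case (Suc k)
  with theta_pos show ?case
    by (cases "xi_reduced k") (simp_all add: xi_Suc_if_reduced unchanged_if_not_reduced)
qed

lemma xi_Suc_cases: "xi (Suc k) = \<theta> * xi k \<or> xi (Suc k) = xi k"
  using xi_Suc_if_reduced unchanged_if_not_reduced by blast

lemma phase2A_out_cases:
  "phase2A_out k = (xt k, \<lambda>e. if e \<in> D k then halve (ta k e) else ta k e)
   \<or> f (fst (phase2A_out k)) \<le> f (xt k) - xi k"
  using phase2A_success_or_halving[OF ord_enumerates(1), of f Iz l u "xi k" "xt k" "ta k" k]
  unfolding phase2A_out_def ord_enumerates(2) by blast

lemma f_x_Suc_le: "f (x (Suc k)) \<le> f (x k)"
  using phase2A_out_cases[of k] f_x_Suc_le_phase2A_out[of k] phase1_nonincreasing[of k] xi_pos[of k]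
  by auto

lemma f_x_Suc_le_if_moved:
  assumes "fst (phase2A_out k) \<noteq> xt k"
  shows "f (x (Suc k)) \<le> f (x k) - xi k"
  using phase2A_out_cases[of k] assms f_x_Suc_le_phase2A_out[of k] phase1_nonincreasing[of k]
  by auto

lemma ta_Suc_halve_if_stuck:
  assumes "\<not> xi_reduced k" and "fst (phase2A_out k) = xt k" and "d \<in> D k"
  shows "ta (Suc k) d = halve (ta k d)"
  using phase2A_out_cases[of k] unchanged_if_not_reduced[OF assms(1)] assms(2,3) xi_pos[of k]
  by auto

lemma frequently_xi_reduced:
  assumes bdd: "bdd_below (range (\<lambda>k. f (x k)))"
  shows "\<exists>\<^sub>F k in sequentially. xi_reduced k"
proof (rule ccontr)
  assume "\<not> ?thesis"
  then obtain N where never: "\<And>k. N \<le> k \<Longrightarrow> \<not> xi_reduced k"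
    by (auto simp: not_frequently eventually_sequentially)
  have frozen: "xi k = xi N \<and> D k = D N" if "N \<le> k" for k
    using that
  proof (induction k rule: dec_induct)
    case (step k)
    with never[of k] show ?case by (simp add: unchanged_if_not_reduced)
  qed simp
  have "decseq (\<lambda>k. f (x k))"
    by (rule decseq_SucI) (rule f_x_Suc_le)
  then have drop: "\<forall>\<^sub>F k in sequentially. f (x k) - xi N < f (x (Suc k))"
    using bdd xi_pos by (rule decseq_bdd_below_eventually_drop_less)
  have unmoved: "fst (phase2A_out k) = xt k" if "N \<le> k" and "f (x k) - xi N < f (x (Suc k))" for k
    using f_x_Suc_le_if_moved[of k] frozen[OF that(1)] that(2) by fastforce
  have stuck: "\<forall>\<^sub>F k in sequentially. N \<le> k \<and> fst (phase2A_out k) = xt k"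
    using eventually_ge_at_top[of N] drop by (rule eventually_elim2) (use unmoved in blast)
  have halving: "ta (Suc k) d = halve (ta k d)"
    if "N \<le> k \<and> fst (phase2A_out k) = xt k" and "d \<in> D N" for k d
  proof (rule ta_Suc_halve_if_stuck)
    from that show "\<not> xi_reduced k" and "fst (phase2A_out k) = xt k" by (simp_all add: never)
    from that frozen[of k] show "d \<in> D k" by simp
  qed
  have "\<forall>\<^sub>F k in sequentially. ta k d = 1" if "d \<in> D N" for d
    by (intro eventually_halving_sequence_eq_one eventually_mono[OF stuck] halving that)
  then have "\<forall>\<^sub>F k in sequentially. \<forall>d\<in>D N. ta k d = 1"
    by (intro eventually_ball_finite) (simp_all add: ord_enumerates(2)[symmetric])
  with stuck have "\<forall>\<^sub>F k in sequentially. N \<le> k \<and> xi_reduced k"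
    by (rule eventually_elim2) (auto simp: xi_reduced_def dest: frozen)
  then obtain k where "N \<le> k" and "xi_reduced k"
    by (auto simp: eventually_sequentially)
  with never show False by blast
qed

lemma xi_tendsto_zero:
  assumes "\<theta> < 1" and "bdd_below (range (\<lambda>k. f (x k)))"
  shows "xi \<longlonglongrightarrow> 0"
proof (rule frequently_contracted_tendsto_zero)
  show "0 \<le> \<theta>" using theta_pos by simp
  show "0 \<le> xi k" for k using xi_pos[of k] by simp
  show "\<exists>\<^sub>F k in sequentially. xi (Suc k) = \<theta> * xi k"
    using frequently_xi_reduced[OF assms(2)] by (rule frequently_elim1) (rule xi_Suc_if_reduced)
qed (use assms(1) xi_Suc_cases in blast)+

lemma x_feasible:
  assumes "x0 \<in> Xbox l u \<inter> Zset Iz"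
  shows "x k \<in> Xbox l u \<inter> Zset Iz"
  using assms x_Suc_feasible by (cases k) (simp_all add: x_0)

end

theorem mainTheorem3:
  fixes Ic Iz :: "'n::finite set" and l u x0 :: "real^'n" and f :: "real^'n \<Rightarrow> real"
    and \<gamma> \<delta> \<theta> \<xi>0 L :: real and s :: "nat \<Rightarrow> real^'n" and D0 :: "(real^'n) set"
    and x xt :: "nat \<Rightarrow> real^'n" and ac xi :: "nat \<Rightarrow> real"
    and D :: "nat \<Rightarrow> (real^'n) set" and ta :: "nat \<Rightarrow> real^'n \<Rightarrow> real"
    and ord :: "nat \<Rightarrow> (real^'n) list"
  assumes "Ic \<inter> Iz = {}" and "Ic \<union> Iz = UNIV"
    and "\<forall>i. l$i < u$i" and "\<forall>i\<in>Iz. l$i \<in> \<int> \<and> u$i \<in> \<int>"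
    and "L > 0"
    and "\<forall>y z. (\<forall>i\<in>Iz. y$i = z$i) \<longrightarrow> \<bar>f y - f z\<bar> \<le> L * norm (y - z)"
    and "\<gamma> > 0" and "0 < \<delta>" and "\<delta> < 1"
    and "x0 \<in> Xbox l u \<inter> Zset Iz" and "\<xi>0 > 0" and "0 < \<theta>" and "\<theta> < 1"
    and "\<forall>k. s k \<in> Dc Ic Iz l u x0 \<and> norm (s k) = 1"
    and "D0 \<subseteq> Dz Ic Iz l u x0"
    and "DFNDFL_run Ic Iz l u f \<gamma> \<delta> \<theta> x0 \<xi>0 s D0 x xt ac xi D ta ord"
  shows "xi \<longlonglongrightarrow> 0"
proof -
  \<comment> \<open>The partition of the indices, the bounds, \<delta> and the search directions play no role here.\<close>
  interpret DFNDFL_iterates Ic Iz l u x0 f \<gamma> \<delta> \<theta> \<xi>0 s D0 x xt ac xi D ta ord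
    using assms(7,11,12,16) by unfold_locales simp_all
  have "bdd_below (f ` (Xbox l u \<inter> Zset Iz))"
    using assms(5,6) by (intro bdd_below_mixed_integer_box) simp_all
  then have "bdd_below (range (\<lambda>k. f (x k)))"
    by (rule bdd_below_mono) (use x_feasible[OF assms(10)] in blast)
  with assms(13) show ?thesis
    by (rule xi_tendsto_zero)
qed

end
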